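(* Let $K\ge1$, $\eta_1,\eta_2\in(0,1]$, $P,\sigma_b^2,\sigma_D^2>0$, and for $k=1,\dots,K$ let $h_k,g_k\in\mathbb{C}\setminus\{0\}$ and $v_k\ge -\eta_1\eta_2P|h_k|^2$. Put $a_k=P|h_k|^2+\max\{0,v_k/\eta_1\}+\min\{0,v_k/(\eta_1\eta_2)\}+\sigma_b^2$ and $U_k=(1+\min\{0,v_k/(\eta_1\eta_2P|h_k|^2)\})P|h_k|^2+\sigma_b^2$. Consider problem (P2): $$\max_{x_1,\dots,x_K}\ J(x_1,\dots,x_K)=\frac{\Big(\sum_{k=1}^K\sqrt{\eta_1|g_k|^2(a_k-x_k)\big(1-\frac{\sigma_b^2}{x_k}\big)}\Big)^2}{\sum_{k=1}^K\eta_1|g_k|^2(a_k-x_k)\frac{\sigma_b^2}{x_k}+\sigma_D^2}\quad\text{s.t. } \sigma_b^2\le x_k\le U_k\ \forall k.$$ Consider the cyclic coordinate-ascent procedure (Algorithm 2): starting from a feasible point, repeatedly cycle through $j=1,\dots,K$, each time replacing $x_j$ by a maximizer over $[\sigma_b^2,U_j]$ of $J$ as a function of $x_j$ with the other coordinates fixed (computed by the Dinkelbach iteration), and stop when the increase of $J$ falls below a threshold $\Delta_2$ (or after a maximum number of iterations). Then this procedure converges to the optimal solution of (P2).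
   Context: Problem (P2) is the end-to-end SNR maximization over the information power-splitting ratios $\lambda_{k,I}$ (via $x_k=\lambda_{k,I}P|h_k|^2+\sigma_b^2$) in a wireless-powered amplify-and-forward distributed-beamforming relay network with $K$ relays, for a fixed battery energy-level variation $v_k$ at each relay; $\eta_1$ is the energy conversion efficiency, $\eta_2$ the battery storage efficiency, $\sigma_b^2$ the relay noise variance, $\sigma_D^2$ the destination noise variance. *)

theory Defs
  imports Complex_Main
begin

text \<open>Relays are indexed by k < K; per-relay data are functions nat => _.
  eta1, eta2: efficiencies; P: source power; sb = sigma_b^2; sD = sigma_D^2;
  h, g: channel coefficients; v: battery energy-level variation.\<close>

definition a_coef :: "real \<Rightarrow> real \<Rightarrow> real \<Rightarrow> real \<Rightarrow> complex \<Rightarrow> real \<Rightarrow> real" where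
  "a_coef eta1 eta2 P sb hk vk =
     P * (cmod hk)^2 + max 0 (vk / eta1) + min 0 (vk / (eta1 * eta2)) + sb"

definition U_coef :: "real \<Rightarrow> real \<Rightarrow> real \<Rightarrow> real \<Rightarrow> complex \<Rightarrow> real \<Rightarrow> real" where
  "U_coef eta1 eta2 P sb hk vk =
     (1 + min 0 (vk / (eta1 * eta2 * P * (cmod hk)^2))) * P * (cmod hk)^2 + sb"

definition J_obj :: "nat \<Rightarrow> real \<Rightarrow> real \<Rightarrow> real \<Rightarrow> real \<Rightarrow> real \<Rightarrow>
    (nat \<Rightarrow> complex) \<Rightarrow> (nat \<Rightarrow> complex) \<Rightarrow> (nat \<Rightarrow> real) \<Rightarrow> (nat \<Rightarrow> real) \<Rightarrow> real" where
  "J_obj K eta1 eta2 P sb sD h g v x =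
     (\<Sum>k<K. sqrt (eta1 * (cmod (g k))^2 * (a_coef eta1 eta2 P sb (h k) (v k) - x k)
                    * (1 - sb / x k)))^2
     / ((\<Sum>k<K. eta1 * (cmod (g k))^2 * (a_coef eta1 eta2 P sb (h k) (v k) - x k) * (sb / x k))
        + sD)"

definition feasible :: "nat \<Rightarrow> real \<Rightarrow> real \<Rightarrow> real \<Rightarrow> real \<Rightarrow>
    (nat \<Rightarrow> complex) \<Rightarrow> (nat \<Rightarrow> real) \<Rightarrow> (nat \<Rightarrow> real) \<Rightarrow> bool" where
  "feasible K eta1 eta2 P sb h v x \<longleftrightarrow>
     (\<forall>k<K. sb \<le> x k \<and> x k \<le> U_coef eta1 eta2 P sb (h k) (v k))"

text \<open>Idealised run of Algorithm 2 (exact coordinate maximisation, threshold 0,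
  no iteration cap): xs n is the point after n single-coordinate updates;
  step n updates coordinate j = n mod K (cyclic order), replacing it by a maximiser
  over [sb, U_j] of J with the other coordinates fixed.\<close>
definition cyclic_ascent :: "nat \<Rightarrow> real \<Rightarrow> real \<Rightarrow> real \<Rightarrow> real \<Rightarrow> real \<Rightarrow>
    (nat \<Rightarrow> complex) \<Rightarrow> (nat \<Rightarrow> complex) \<Rightarrow> (nat \<Rightarrow> real) \<Rightarrow> (nat \<Rightarrow> nat \<Rightarrow> real) \<Rightarrow> bool" where
  "cyclic_ascent K eta1 eta2 P sb sD h g v xs \<longleftrightarrow>
     feasible K eta1 eta2 P sb h v (xs 0) \<and>
     (\<forall>n. let j = n mod K; U = U_coef eta1 eta2 P sb (h j) (v j) in
        (\<forall>k. k \<noteq> j \<longrightarrow> xs (Suc n) k = xs n k) \<and>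
        sb \<le> xs (Suc n) j \<and> xs (Suc n) j \<le> U \<and>
        (\<forall>t. sb \<le> t \<and> t \<le> U \<longrightarrow>
           J_obj K eta1 eta2 P sb sD h g v ((xs n)(j := t))
             \<le> J_obj K eta1 eta2 P sb sD h g v (xs (Suc n))))"

definition opt_val :: "nat \<Rightarrow> real \<Rightarrow> real \<Rightarrow> real \<Rightarrow> real \<Rightarrow> real \<Rightarrow>
    (nat \<Rightarrow> complex) \<Rightarrow> (nat \<Rightarrow> complex) \<Rightarrow> (nat \<Rightarrow> real) \<Rightarrow> real" where
  "opt_val K eta1 eta2 P sb sD h g v =
     Sup (J_obj K eta1 eta2 P sb sD h g v ` {x. feasible K eta1 eta2 P sb h v x})"

end

theory Submission
  imports Defs "HOL-Analysis.Convex" "HOL-Analysis.Elementary_Metric_Spaces"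
begin

(* Reparametrise each coordinate t by 1/t, i.e. interpolate with harm_comb. Along such
   segments every noise term is affine and every signal term sig k strictly concave. At a
   point x that is maximal in coordinate j, comparing one-sided derivatives along the segment
   towards any feasible t gives the bound sig j t \<le> sqrt (sig j (x j)) * w, with a weight w
   affine in the noise term of t. Cauchy-Schwarz turns these bounds into
   (ampl z)^2 \<le> snr x * noise_power z, so a point maximal in every coordinate is a global
   maximiser, and strict concavity makes each coordinate maximiser unique.
   Along the algorithm snr increases and converges. Choose a subsequence along which the K
   blocks of consecutive iterates converge; the block limits are maximal in their own
   coordinate and, by uniqueness, coincide, so their common limit is a global maximiser. *)

definition harm_comb :: "real \<Rightarrow> real \<Rightarrow> real \<Rightarrow> real" where
  "harm_comb e x y = 1 / ((1 - e) / x + e / y)"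

lemma inverse_harm_comb: "1 / harm_comb e x y = (1 - e) / x + e / y"
  by (simp add: harm_comb_def)

lemma affine_inverse_harm_comb:
  "\<alpha> / harm_comb e x y + \<beta> = (1 - e) * (\<alpha> / x + \<beta>) + e * (\<alpha> / y + \<beta>)"
proof -
  have "\<alpha> / harm_comb e x y = \<alpha> * (1 / harm_comb e x y)" by simp
  then show ?thesis unfolding inverse_harm_comb by (simp add: algebra_simps)
qed

lemma harm_comb_pos:
  assumes "0 < x" "0 < y" "0 \<le> e" "e \<le> 1"
  shows "0 < harm_comb e x y"
proof -
  have "0 < (1 - e) / x + e / y"
    using assms by (cases "e = 1") (auto intro: add_pos_nonneg add_nonneg_pos)
  then show ?thesis by (simp add: harm_comb_def)
qed

lemma harm_comb_between:
  assumes "0 < lo" "lo \<le> x" "x \<le> hi" "lo \<le> y" "y \<le> hi" "0 \<le> e" "e \<le> 1"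
  shows "lo \<le> harm_comb e x y" "harm_comb e x y \<le> hi"
proof -
  have "(1 - e) / hi + e / hi \<le> (1 - e) / x + e / y"
    using assms by (intro add_mono divide_left_mono) auto
  then have le: "1 / hi \<le> 1 / harm_comb e x y"
    unfolding inverse_harm_comb by (simp add: add_divide_distrib[symmetric])
  have "(1 - e) / x + e / y \<le> (1 - e) / lo + e / lo"
    using assms by (intro add_mono divide_left_mono) auto
  then have ge: "1 / harm_comb e x y \<le> 1 / lo"
    unfolding inverse_harm_comb by (simp add: add_divide_distrib[symmetric])
  have pos: "0 < harm_comb e x y"
    using assms by (intro harm_comb_pos) auto
  show "lo \<le> harm_comb e x y" using ge pos assms(1) by (simp add: field_simps)
  show "harm_comb e x y \<le> hi" using le pos assms by (simp add: field_simps)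
qed

lemma harm_comb_le_convex_comb:
  assumes "0 < x" "0 < y" "0 \<le> e" "e \<le> 1"
  shows "harm_comb e x y \<le> (1 - e) * x + e * y"
    and "0 < e \<Longrightarrow> e < 1 \<Longrightarrow> x \<noteq> y \<Longrightarrow> harm_comb e x y < (1 - e) * x + e * y"
proof -
  define W where "W = (1 - e) / x + e / y"
  have hW: "harm_comb e x y = 1 / W" by (simp add: harm_comb_def W_def)
  have "0 < W" using harm_comb_pos[OF assms] by (simp add: hW)
  have gap: "((1 - e) * x + e * y) * W - 1 = e * (1 - e) * (x - y)\<^sup>2 / (x * y)"
    using assms unfolding W_def by (simp add: field_simps power2_eq_square)
  have "0 \<le> e * (1 - e) * (x - y)\<^sup>2 / (x * y)" using assms by simp
  then show "harm_comb e x y \<le> (1 - e) * x + e * y"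
    using gap \<open>0 < W\<close> unfolding hW by (simp add: divide_le_eq)
  assume "0 < e" "e < 1" "x \<noteq> y"
  then have "0 < e * (1 - e) * (x - y)\<^sup>2 / (x * y)" using assms by simp
  then show "harm_comb e x y < (1 - e) * x + e * y"
    using gap \<open>0 < W\<close> unfolding hW by (simp add: divide_less_eq)
qed

lemma finite_coords_convergent_subseq:
  fixes X :: "nat \<Rightarrow> 'i \<Rightarrow> 'a::heine_borel"
  assumes "finite I" and "\<And>i. i \<in> I \<Longrightarrow> bounded (range (\<lambda>n. X n i))"
  obtains r y where "strict_mono r" "\<And>i. i \<in> I \<Longrightarrow> (\<lambda>n. X (r n) i) \<longlonglongrightarrow> y i"
proof -
  have "\<exists>y r. strict_mono r \<and>
      (\<forall>\<epsilon>>0. eventually (\<lambda>n. \<forall>i\<in>I. dist (X (r n) i) (y i) < \<epsilon>) sequentially)"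
    using compact_lemma_general[where basis = I and f = X and proj = "\<lambda>x i. x i" and unproj = id] assms
    by (simp add: image_image)
  then obtain y r where "strict_mono r"
    and y: "\<And>\<epsilon>. \<epsilon> > 0 \<Longrightarrow> eventually (\<lambda>n. \<forall>i\<in>I. dist (X (r n) i) (y i) < \<epsilon>) sequentially"
    by blast
  have "(\<lambda>n. X (r n) i) \<longlonglongrightarrow> y i" if "i \<in> I" for i
    unfolding tendsto_iff using y that by (fast elim: eventually_mono)
  then show ?thesis using that \<open>strict_mono r\<close> by blast
qed

lemma sqrt_quotient_max_first_order:
  fixes A p u L T D :: real
  assumes A: "0 \<le> A" and p: "0 \<le> p" and T: "0 < T" and LT: "L * T = (A + p)\<^sup>2"
    and nonneg: "\<And>e. 0 \<le> e \<Longrightarrow> e \<le> 1 \<Longrightarrow> 0 \<le> p\<^sup>2 + e * u"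
    and max: "\<And>e. 0 < e \<Longrightarrow> e \<le> 1 \<Longrightarrow> (A + sqrt (p\<^sup>2 + e * u))\<^sup>2 \<le> L * (T + e * D)"
  shows "p\<^sup>2 + u \<le> p * (p + (A + p) / T * D)"
proof -
  define r where "r e = sqrt (p\<^sup>2 + e * u)" for e
  \<comment> \<open>e * \<chi> e = (r e + p) * ((A + r e)^2 - L * (T + e * D)): up to the factor r e + p,
      \<chi> is the difference quotient at 0 of a function that vanishes at 0 and is \<le> 0 on (0, 1].\<close>
  define \<chi> where "\<chi> e = u * (2 * A + r e + p) - L * D * (r e + p)" for e
  have r: "0 \<le> r e" "(r e)\<^sup>2 = p\<^sup>2 + e * u" if "0 \<le> e" "e \<le> 1" for e
    using nonneg[OF that] by (simp_all add: r_def)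
  have \<chi>_nonpos: "\<chi> e \<le> 0" if e: "0 < e" "e \<le> 1" for e
  proof (cases "r e + p = 0")
    case True
    then have "r e = 0" "p = 0" using r[of e] p e by linarith+
    then have "u = 0" using r(2)[of e] e by simp
    then show ?thesis using True by (simp add: \<chi>_def)
  next
    case False
    then have rp: "0 < r e + p" using r[of e] p e by simp
    have "(A + r e)\<^sup>2 - (A + p)\<^sup>2 = (r e - p) * (2 * A + r e + p)"
      by (simp add: power2_eq_square algebra_simps)
    then have "(r e - p) * (2 * A + r e + p) \<le> L * e * D"
      using max[OF e] LT by (simp add: r_def algebra_simps)
    then have "(r e - p) * (r e + p) * (2 * A + r e + p) \<le> L * e * D * (r e + p)"
      using rp by (simp add: mult.commute mult.left_commute mult_le_cancel_left_pos)
    moreover have "(r e - p) * (r e + p) = e * u"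
      using r[of e] e by (simp add: power2_eq_square algebra_simps)
    then have "e * \<chi> e = (r e - p) * (r e + p) * (2 * A + r e + p) - L * e * D * (r e + p)"
      by (simp add: \<chi>_def algebra_simps)
    ultimately have "e * \<chi> e \<le> 0" by linarith
    then show ?thesis using e by (simp add: mult_le_0_iff)
  qed
  have "\<chi> 0 \<le> 0"
  proof (rule tendsto_upperbound)
    have "isCont \<chi> 0" unfolding \<chi>_def r_def by (intro continuous_intros)
    then show "(\<chi> \<longlongrightarrow> \<chi> 0) (at_right 0)" by (simp add: isCont_def filterlim_at_split)
    show "\<forall>\<^sub>F e in at_right 0. \<chi> e \<le> 0"
      using eventually_at_right_real[OF zero_less_one] by eventually_elim (auto intro: \<chi>_nonpos)
  qed simp
  moreover have "\<chi> 0 = 2 * ((A + p) * (u - p * ((A + p) / T) * D))"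
  proof -
    have "r 0 = p" using p by (simp add: r_def)
    moreover have "L = (A + p) * ((A + p) / T)"
      using LT T by (simp add: field_simps power2_eq_square)
    ultimately show ?thesis by (simp add: \<chi>_def algebra_simps)
  qed
  ultimately have first_order: "(A + p) * (u - p * ((A + p) / T) * D) \<le> 0" by simp
  show ?thesis
  proof (cases "A + p = 0")
    case True
    then have "p = 0" "A = 0" "L = 0" using A p LT T by auto
    then show ?thesis using max[of 1] r[of 1] by simp
  next
    case False
    then have "u \<le> p * ((A + p) / T) * D"
      using first_order A p by (simp add: mult_le_0_iff)
    then show ?thesis by (simp add: power2_eq_square algebra_simps)
  qed
qed

lemma sum_update_arg:
  fixes F :: "'i \<Rightarrow> 'a \<Rightarrow> 'b::ab_group_add"
  assumes "finite I" "j \<in> I"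
  shows "(\<Sum>k\<in>I. F k ((x(j := t)) k)) = (\<Sum>k\<in>I. F k (x k)) - F j (x j) + F j t"
proof -
  have "(\<Sum>k\<in>I - {j}. F k ((x(j := t)) k)) = (\<Sum>k\<in>I - {j}. F k (x k))"
    by (rule sum.cong) auto
  then show ?thesis
    using sum.remove[OF assms, of "\<lambda>k. F k ((x(j := t)) k)"] sum.remove[OF assms, of "\<lambda>k. F k (x k)"]
    by simp
qed

(* c k = eta1 |g_k|^2, and a k, U k are a_k, U_k of (P2); sig k and noise k are the signal
   and noise contributions of relay k. *)
locale relay_snr =
  fixes K :: nat and c a U :: "nat \<Rightarrow> real" and sb sD :: real
  assumes K_pos: "0 < K" and sb_pos: "0 < sb" and sD_pos: "0 < sD"
    and c_pos: "\<And>k. k < K \<Longrightarrow> 0 < c k" and U_le_a: "\<And>k. k < K \<Longrightarrow> U k \<le> a k"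
begin

definition sig :: "nat \<Rightarrow> real \<Rightarrow> real" where
  "sig k t = c k * (a k - t) * (1 - sb / t)"

definition noise :: "nat \<Rightarrow> real \<Rightarrow> real" where
  "noise k t = c k * (a k - t) * (sb / t)"

definition ampl :: "(nat \<Rightarrow> real) \<Rightarrow> real" where
  "ampl x = (\<Sum>k<K. sqrt (sig k (x k)))"

definition noise_power :: "(nat \<Rightarrow> real) \<Rightarrow> real" where
  "noise_power x = (\<Sum>k<K. noise k (x k)) + sD"

definition snr :: "(nat \<Rightarrow> real) \<Rightarrow> real" where
  "snr x = (ampl x)\<^sup>2 / noise_power x"

definition in_box :: "(nat \<Rightarrow> real) \<Rightarrow> bool" where
  "in_box x \<longleftrightarrow> (\<forall>k<K. sb \<le> x k \<and> x k \<le> U k)"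

definition coord_max :: "(nat \<Rightarrow> real) \<Rightarrow> nat \<Rightarrow> bool" where
  "coord_max x j \<longleftrightarrow> (\<forall>t. sb \<le> t \<and> t \<le> U j \<longrightarrow> snr (x(j := t)) \<le> snr x)"

lemma in_box_update: "in_box x \<Longrightarrow> sb \<le> t \<Longrightarrow> t \<le> U j \<Longrightarrow> in_box (x(j := t))"
  by (simp add: in_box_def)

lemma sig_nonneg: "k < K \<Longrightarrow> sb \<le> t \<Longrightarrow> t \<le> U k \<Longrightarrow> 0 \<le> sig k t"
  using U_le_a[of k] c_pos[of k] sb_pos by (simp add: sig_def)

lemma noise_nonneg: "k < K \<Longrightarrow> sb \<le> t \<Longrightarrow> t \<le> U k \<Longrightarrow> 0 \<le> noise k t"
  using U_le_a[of k] c_pos[of k] sb_pos by (simp add: noise_def)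

lemma ampl_nonneg: "in_box x \<Longrightarrow> 0 \<le> ampl x"
  unfolding ampl_def in_box_def using sig_nonneg by (intro sum_nonneg) auto

lemma noise_power_ge: "in_box x \<Longrightarrow> sD \<le> noise_power x"
  unfolding noise_power_def in_box_def using noise_nonneg
  by (smt (verit) lessThan_iff sum_nonneg)

lemma noise_power_pos: "in_box x \<Longrightarrow> 0 < noise_power x"
  using noise_power_ge sD_pos by fastforce

lemma ampl_update: "j < K \<Longrightarrow> ampl (x(j := t)) = ampl x - sqrt (sig j (x j)) + sqrt (sig j t)"
  unfolding ampl_def by (rule sum_update_arg) auto

lemma noise_power_update: "j < K \<Longrightarrow> noise_power (x(j := t)) = noise_power x - noise j (x j) + noise j t"
  unfolding noise_power_def using sum_update_arg[of "{..<K}" j noise x t] by simp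

lemma snr_cong: "(\<And>k. k < K \<Longrightarrow> x k = y k) \<Longrightarrow> snr x = snr y"
  by (simp add: snr_def ampl_def noise_power_def)

lemma noise_harm_comb:
  assumes "0 < x" "0 < y" "0 \<le> e" "e \<le> 1"
  shows "noise k (harm_comb e x y) = (1 - e) * noise k x + e * noise k y"
proof -
  have affine: "noise k t = c k * sb * a k / t + - (c k * sb)" if "0 < t" for t
    using that by (simp add: noise_def field_simps)
  show ?thesis
    unfolding affine[OF harm_comb_pos[OF assms]] affine[OF assms(1)] affine[OF assms(2)]
    by (rule affine_inverse_harm_comb)
qed

lemma sig_eq: "sig k t = c k * (a k - t) - noise k t"
  by (simp add: sig_def noise_def algebra_simps)

lemma sig_harm_comb:
  assumes "k < K" "0 < x" "0 < y" "0 \<le> e" "e \<le> 1"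
  shows "(1 - e) * sig k x + e * sig k y \<le> sig k (harm_comb e x y)"
    and "0 < e \<Longrightarrow> e < 1 \<Longrightarrow> x \<noteq> y \<Longrightarrow>
      (1 - e) * sig k x + e * sig k y < sig k (harm_comb e x y)"
proof -
  have gap: "sig k (harm_comb e x y) - ((1 - e) * sig k x + e * sig k y)
      = c k * ((1 - e) * x + e * y - harm_comb e x y)"
    using noise_harm_comb[OF assms(2-5), of k] by (simp add: sig_eq algebra_simps)
  show "(1 - e) * sig k x + e * sig k y \<le> sig k (harm_comb e x y)"
    using gap harm_comb_le_convex_comb(1)[OF assms(2-5)] c_pos[OF assms(1)]
    by (smt (verit) mult_nonneg_nonneg)
  assume "0 < e" "e < 1" "x \<noteq> y"
  then show "(1 - e) * sig k x + e * sig k y < sig k (harm_comb e x y)"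
    using gap harm_comb_le_convex_comb(2)[OF assms(2-5)] c_pos[OF assms(1)]
    by (smt (verit) mult_pos_pos)
qed

lemma sqrt_sig_le_ampl: "in_box x \<Longrightarrow> j < K \<Longrightarrow> sqrt (sig j (x j)) \<le> ampl x"
  unfolding ampl_def in_box_def by (rule member_le_sum) (auto intro: sig_nonneg)

lemma coord_max_along_harm_comb:
  assumes x: "in_box x" and j: "j < K" and cm: "coord_max x j"
    and t: "sb \<le> t" "t \<le> U j" and e: "0 \<le> e" "e \<le> 1"
  shows "(ampl x - sqrt (sig j (x j)) + sqrt ((1 - e) * sig j (x j) + e * sig j t))\<^sup>2
    \<le> snr x * (noise_power x + e * (noise j t - noise j (x j)))"
proof -
  define y where "y = harm_comb e (x j) t"
  have xj: "sb \<le> x j" "x j \<le> U j" using x j by (auto simp: in_box_def)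
  have y: "sb \<le> y" "y \<le> U j"
    using harm_comb_between[OF sb_pos xj t e] by (simp_all add: y_def)
  have pos: "0 < x j" "0 < t" using xj t sb_pos by auto
  have "0 \<le> ampl x - sqrt (sig j (x j))"
    using sqrt_sig_le_ampl[OF x j] by simp
  moreover have "0 \<le> (1 - e) * sig j (x j) + e * sig j t"
    using sig_nonneg[OF j xj] sig_nonneg[OF j t] e by simp
  moreover have "ampl x - sqrt (sig j (x j)) + sqrt ((1 - e) * sig j (x j) + e * sig j t)
      \<le> ampl (x(j := y))"
    using sig_harm_comb(1)[OF j pos e] by (simp add: ampl_update[OF j] y_def)
  ultimately have "(ampl x - sqrt (sig j (x j)) + sqrt ((1 - e) * sig j (x j) + e * sig j t))\<^sup>2
      \<le> (ampl (x(j := y)))\<^sup>2"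
    by (intro power_mono) auto
  also have "\<dots> = snr (x(j := y)) * noise_power (x(j := y))"
    using noise_power_pos[OF in_box_update[OF x y]] by (simp add: snr_def)
  also have "\<dots> \<le> snr x * noise_power (x(j := y))"
    using cm y noise_power_pos[OF in_box_update[OF x y]] by (simp add: coord_max_def)
  also have "noise_power (x(j := y)) = noise_power x + e * (noise j t - noise j (x j))"
    using noise_harm_comb[OF pos e, of j] by (simp add: noise_power_update[OF j] y_def algebra_simps)
  finally show ?thesis .
qed

definition tangent_weight :: "(nat \<Rightarrow> real) \<Rightarrow> nat \<Rightarrow> real \<Rightarrow> real" where
  "tangent_weight x k t =
     sqrt (sig k (x k)) + ampl x / noise_power x * (noise k t - noise k (x k))"

lemma coord_max_first_order:
  assumes x: "in_box x" and j: "j < K" and cm: "coord_max x j" and t: "sb \<le> t" "t \<le> U j"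
  shows "sig j t \<le> sqrt (sig j (x j)) * tangent_weight x j t"
proof -
  define p where "p = sqrt (sig j (x j))"
  define u where "u = sig j t - p\<^sup>2"
  have xj: "sb \<le> x j" "x j \<le> U j" using x j by (auto simp: in_box_def)
  have p: "0 \<le> p" "p\<^sup>2 = sig j (x j)" using sig_nonneg[OF j xj] by (simp_all add: p_def)
  have interp: "p\<^sup>2 + e * u = (1 - e) * sig j (x j) + e * sig j t" for e
    by (simp add: u_def p algebra_simps)
  have "p\<^sup>2 + u \<le> p * (p + (ampl x - p + p) / noise_power x * (noise j t - noise j (x j)))"
  proof (rule sqrt_quotient_max_first_order)
    show "0 \<le> ampl x - p" using sqrt_sig_le_ampl[OF x j] by (simp add: p_def)
    show "snr x * noise_power x = (ampl x - p + p)\<^sup>2"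
      using noise_power_pos[OF x] by (simp add: snr_def)
    show "0 \<le> p\<^sup>2 + e * u" if "0 \<le> e" "e \<le> 1" for e
      unfolding interp using sig_nonneg[OF j xj] sig_nonneg[OF j t] that by simp
    show "(ampl x - p + sqrt (p\<^sup>2 + e * u))\<^sup>2
        \<le> snr x * (noise_power x + e * (noise j t - noise j (x j)))" if "0 < e" "e \<le> 1" for e
      using coord_max_along_harm_comb[OF x j cm t, folded p_def] that unfolding interp by simp
  qed (use p noise_power_pos[OF x] in auto)
  then show ?thesis by (simp add: u_def p tangent_weight_def flip: p_def)
qed

lemma coord_max_first_order_strict:
  assumes x: "in_box x" and j: "j < K" and cm: "coord_max x j"
    and t: "sb \<le> t" "t \<le> U j" and ne: "t \<noteq> x j"
  shows "sig j t < sqrt (sig j (x j)) * tangent_weight x j t"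
proof -
  define y where "y = harm_comb (1/2) (x j) t"
  have xj: "sb \<le> x j" "x j \<le> U j" using x j by (auto simp: in_box_def)
  have pos: "0 < x j" "0 < t" using xj t sb_pos by auto
  have y: "sb \<le> y" "y \<le> U j" using harm_comb_between[OF sb_pos xj t] by (simp_all add: y_def)
  have "sig j t / 2 + sig j (x j) / 2 < sig j y"
    using sig_harm_comb(2)[OF j pos, of "1/2"] ne by (simp add: y_def)
  also have "sig j y \<le> sqrt (sig j (x j)) * tangent_weight x j y"
    using coord_max_first_order[OF x j cm y] .
  also have "tangent_weight x j y = (sqrt (sig j (x j)) + tangent_weight x j t) / 2"
  proof -
    have half: "noise j y - noise j (x j) = (noise j t - noise j (x j)) / 2"
      using noise_harm_comb[OF pos, of "1/2" j] by (simp add: y_def field_simps)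
    show ?thesis
      unfolding tangent_weight_def half using noise_power_pos[OF x] by (simp add: field_simps)
  qed
  finally show ?thesis
    using sig_nonneg[OF j xj] by (simp add: field_simps)
qed

lemma tangent_weight_bound:
  assumes x: "in_box x" and k: "k < K" and cm: "z \<noteq> x k \<Longrightarrow> coord_max x k"
    and z: "sb \<le> z" "z \<le> U k"
  shows "sig k z \<le> sqrt (sig k (x k)) * tangent_weight x k z"
    and "0 \<le> tangent_weight x k z"
    and "z \<noteq> x k \<Longrightarrow> sig k z < sqrt (sig k (x k)) * tangent_weight x k z"
proof -
  have same: "tangent_weight x k (x k) = sqrt (sig k (x k))"
    by (simp add: tangent_weight_def)
  have sig_x: "0 \<le> sig k (x k)" using x k by (auto simp: in_box_def intro: sig_nonneg)
  show "sig k z \<le> sqrt (sig k (x k)) * tangent_weight x k z"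
  proof (cases "z = x k")
    case True
    then show ?thesis using sig_x same by simp
  qed (use coord_max_first_order[OF x k _ z] cm in auto)
  show strict: "z \<noteq> x k \<Longrightarrow> sig k z < sqrt (sig k (x k)) * tangent_weight x k z"
    using coord_max_first_order_strict[OF x k cm z] .
  show "0 \<le> tangent_weight x k z"
  proof (cases "z = x k")
    case False
    then have "0 < sqrt (sig k (x k)) * tangent_weight x k z"
      using strict sig_nonneg[OF k z] by linarith
    then show ?thesis using sig_x by (simp add: zero_less_mult_iff)
  qed (simp add: same sig_x)
qed

lemma sum_tangent_weight:
  assumes "in_box x"
  shows "(\<Sum>k<K. tangent_weight x k (z k)) = ampl x / noise_power x * noise_power z"
proof -
  have "(\<Sum>k<K. tangent_weight x k (z k))
      = ampl x + ampl x / noise_power x * (noise_power z - noise_power x)"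
    using sum_distrib_left[of "ampl x / noise_power x" "\<lambda>k. noise k (z k) - noise k (x k)" "{..<K}"]
    by (simp add: tangent_weight_def sum.distrib sum_subtractf ampl_def[symmetric] noise_power_def)
  then show ?thesis using noise_power_pos[OF assms] by (simp add: field_simps)
qed

lemma ampl_sq_le_at_partial_max:
  assumes x: "in_box x" and z: "in_box z"
    and cm: "\<And>k. k < K \<Longrightarrow> z k \<noteq> x k \<Longrightarrow> coord_max x k"
  shows "(ampl z)\<^sup>2 \<le> snr x * noise_power z"
    and "\<exists>k<K. z k \<noteq> x k \<Longrightarrow> (ampl z)\<^sup>2 < snr x * noise_power z"
proof -
  define p where "p k = sqrt (sig k (x k))" for k
  define w where "w k = tangent_weight x k (z k)" for k
  have zk: "sb \<le> z k" "z k \<le> U k" if "k < K" for k using z that by (auto simp: in_box_def)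
  have pw: "0 \<le> p k" "0 \<le> w k" if "k < K" for k
  proof -
    have "sb \<le> x k" "x k \<le> U k" using x that by (auto simp: in_box_def)
    then show "0 \<le> p k" "0 \<le> w k"
      using sig_nonneg[OF that] tangent_weight_bound(2)[OF x that cm[OF that] zk[OF that]]
      by (simp_all add: p_def w_def)
  qed
  have le: "sqrt (sig k (z k)) \<le> sqrt (p k) * sqrt (w k)" if "k < K" for k
    using tangent_weight_bound(1)[OF x that cm[OF that] zk[OF that]] by (simp add: p_def w_def real_sqrt_mult[symmetric])
  have "(\<Sum>k<K. sqrt (p k) * sqrt (w k))\<^sup>2 \<le> (\<Sum>k<K. p k) * (\<Sum>k<K. w k)"
    using Cauchy_Schwarz_ineq_sum[of "\<lambda>k. sqrt (p k)" "\<lambda>k. sqrt (w k)" "{..<K}"] pw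
    by simp
  also have "\<dots> = snr x * noise_power z"
    using sum_tangent_weight[OF x, of z]
    by (simp add: p_def w_def snr_def ampl_def[symmetric] power2_eq_square)
  finally have cs: "(\<Sum>k<K. sqrt (p k) * sqrt (w k))\<^sup>2 \<le> snr x * noise_power z" .
  have "ampl z \<le> (\<Sum>k<K. sqrt (p k) * sqrt (w k))"
    unfolding ampl_def using le by (intro sum_mono) auto
  then have "(ampl z)\<^sup>2 \<le> (\<Sum>k<K. sqrt (p k) * sqrt (w k))\<^sup>2"
    using ampl_nonneg[OF z] by (rule power_mono)
  then show "(ampl z)\<^sup>2 \<le> snr x * noise_power z" using cs by linarith
  assume "\<exists>k<K. z k \<noteq> x k"
  then obtain j where j: "j < K" "z j \<noteq> x j" by blast
  have "sqrt (sig j (z j)) < sqrt (p j) * sqrt (w j)"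
    using tangent_weight_bound(3)[OF x j(1) cm[OF j(1)] zk[OF j(1)] j(2)] by (simp add: p_def w_def real_sqrt_mult[symmetric])
  then have "ampl z < (\<Sum>k<K. sqrt (p k) * sqrt (w k))"
    unfolding ampl_def using le j(1) by (intro sum_strict_mono_ex1) auto
  then have "(ampl z)\<^sup>2 < (\<Sum>k<K. sqrt (p k) * sqrt (w k))\<^sup>2"
    using ampl_nonneg[OF z] by (rule power_strict_mono) simp
  then show "(ampl z)\<^sup>2 < snr x * noise_power z" using cs by linarith
qed

lemma coord_max_imp_max:
  assumes x: "in_box x" and cm: "\<And>j. j < K \<Longrightarrow> coord_max x j" and z: "in_box z"
  shows "snr z \<le> snr x"
  using ampl_sq_le_at_partial_max(1)[OF x z cm] noise_power_pos[OF z]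
  by (simp add: snr_def divide_le_eq)

lemma coord_max_unique:
  assumes x: "in_box x" and j: "j < K" and cm: "coord_max x j"
    and t: "sb \<le> t" "t \<le> U j" and ge: "snr x \<le> snr (x(j := t))"
  shows "t = x j"
proof (rule ccontr)
  assume ne: "t \<noteq> x j"
  have z: "in_box (x(j := t))" using in_box_update[OF x t] .
  have "(ampl (x(j := t)))\<^sup>2 < snr x * noise_power (x(j := t))"
    by (rule ampl_sq_le_at_partial_max(2)[OF x z]) (use cm j ne in \<open>auto split: if_splits\<close>)
  then have "snr (x(j := t)) < snr x"
    using noise_power_pos[OF z] by (simp add: snr_def divide_less_eq)
  then show False using ge by simp
qed

lemma snr_tendsto:
  assumes y: "in_box y" and X: "\<And>k. k < K \<Longrightarrow> (\<lambda>n. X n k) \<longlonglongrightarrow> y k"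
  shows "(\<lambda>n. snr (X n)) \<longlonglongrightarrow> snr y"
proof -
  have y0: "y k \<noteq> 0" if "k < K" for k using y that sb_pos by (auto simp: in_box_def)
  have "(\<lambda>n. ampl (X n)) \<longlonglongrightarrow> ampl y" unfolding ampl_def sig_def
    by (intro tendsto_sum tendsto_intros) (use X y0 in auto)
  moreover have "(\<lambda>n. noise_power (X n)) \<longlonglongrightarrow> noise_power y" unfolding noise_power_def noise_def
    by (intro tendsto_add tendsto_const tendsto_sum tendsto_intros) (use X y0 in auto)
  ultimately show ?thesis
    unfolding snr_def using noise_power_pos[OF y] by (intro tendsto_intros) auto
qed

lemma snr_le_bound: "in_box x \<Longrightarrow> snr x \<le> (\<Sum>k<K. sqrt (c k * a k))\<^sup>2 / sD"
proof -
  assume x: "in_box x"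
  have "sqrt (sig k (x k)) \<le> sqrt (c k * a k)" if k: "k < K" for k
  proof -
    have xk: "sb \<le> x k" "x k \<le> U k" using x k by (auto simp: in_box_def)
    then have "(a k - x k) * (1 - sb / x k) \<le> (a k - x k) * 1"
      using U_le_a[OF k] sb_pos by (intro mult_left_mono) auto
    then have "(a k - x k) * (1 - sb / x k) \<le> a k" using xk sb_pos by simp
    then show ?thesis using c_pos[OF k] by (simp add: sig_def mult.assoc)
  qed
  then have "ampl x \<le> (\<Sum>k<K. sqrt (c k * a k))" unfolding ampl_def by (intro sum_mono) auto
  then have "(ampl x)\<^sup>2 \<le> (\<Sum>k<K. sqrt (c k * a k))\<^sup>2"
    using ampl_nonneg[OF x] by (rule power_mono)
  then show ?thesis
    unfolding snr_def using noise_power_ge[OF x] sD_pos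
    by (meson frac_le zero_le_power2 order_trans)
qed

lemma coord_max_cong:
  assumes "\<And>k. k < K \<Longrightarrow> x k = y k" "j < K"
  shows "coord_max x j \<longleftrightarrow> coord_max y j"
proof -
  have "snr (x(j := t)) = snr (y(j := t))" for t by (rule snr_cong) (simp add: assms)
  moreover have "snr x = snr y" by (rule snr_cong) (simp add: assms)
  ultimately show ?thesis by (simp add: coord_max_def)
qed

context
  fixes xs :: "nat \<Rightarrow> nat \<Rightarrow> real"
  assumes start: "in_box (xs 0)"
    and frame: "\<And>n k. k \<noteq> n mod K \<Longrightarrow> xs (Suc n) k = xs n k"
    and step_in_box: "\<And>n. sb \<le> xs (Suc n) (n mod K) \<and> xs (Suc n) (n mod K) \<le> U (n mod K)"
    and step_max: "\<And>n t. sb \<le> t \<Longrightarrow> t \<le> U (n mod K) \<Longrightarrow>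
      snr ((xs n)(n mod K := t)) \<le> snr (xs (Suc n))"
begin

lemma ascent_Suc: "xs (Suc n) = (xs n)(n mod K := xs (Suc n) (n mod K))"
  by (auto simp: frame)

lemma ascent_in_box: "in_box (xs n)"
proof (induction n)
  case (Suc n)
  then show ?case
    using in_box_update step_in_box[of n] by (subst ascent_Suc) blast
qed (rule start)

lemma ascent_incseq: "incseq (\<lambda>n. snr (xs n))"
proof (rule incseq_SucI)
  fix n
  have "sb \<le> xs n (n mod K)" "xs n (n mod K) \<le> U (n mod K)"
    using ascent_in_box[of n] K_pos by (auto simp: in_box_def)
  then show "snr (xs n) \<le> snr (xs (Suc n))" using step_max by fastforce
qed

lemma ascent_convergent: "convergent (\<lambda>n. snr (xs n))"
  using ascent_incseq snr_le_bound[OF ascent_in_box]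
  by (metis (no_types, lifting) incseq_convergent convergentI)

lemma ascent_le_lim: "snr (xs n) \<le> lim (\<lambda>n. snr (xs n))"
  using incseq_le[OF ascent_incseq ascent_convergent[unfolded convergent_LIMSEQ_iff]] .

lemma ascent_limit_point:
  assumes r: "strict_mono r" and y: "\<And>k. k < K \<Longrightarrow> (\<lambda>n. xs (r n) k) \<longlonglongrightarrow> y k"
  shows "in_box y" and "snr y = lim (\<lambda>n. snr (xs n))"
proof -
  show y_box: "in_box y"
    unfolding in_box_def
  proof (intro allI impI conjI)
    fix k assume k: "k < K"
    show "sb \<le> y k"
      by (rule LIMSEQ_le_const[OF y[OF k]]) (use ascent_in_box k in \<open>auto simp: in_box_def\<close>)
    show "y k \<le> U k"
      by (rule LIMSEQ_le_const2[OF y[OF k]]) (use ascent_in_box k in \<open>auto simp: in_box_def\<close>)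
  qed
  have "(\<lambda>n. snr (xs (r n))) \<longlonglongrightarrow> lim (\<lambda>n. snr (xs n))"
    using LIMSEQ_subseq_LIMSEQ[OF ascent_convergent[unfolded convergent_LIMSEQ_iff] r]
    by (simp add: comp_def)
  then show "snr y = lim (\<lambda>n. snr (xs n))"
    using snr_tendsto[OF y_box y] LIMSEQ_unique by blast
qed

lemma ascent_limit_point_coord_max:
  assumes r: "strict_mono r" and y: "\<And>k. k < K \<Longrightarrow> (\<lambda>n. xs (r n) k) \<longlonglongrightarrow> y k"
    and mod: "\<And>n. r n mod K = j"
  shows "coord_max y j"
  unfolding coord_max_def
proof (intro allI impI)
  fix t assume t: "sb \<le> t \<and> t \<le> U j"
  have "(\<lambda>n. snr ((xs (r n))(j := t))) \<longlonglongrightarrow> snr (y(j := t))"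
    by (rule snr_tendsto) (use in_box_update[OF ascent_limit_point(1)[OF r y]] t y in auto)
  moreover have "snr ((xs (r n))(j := t)) \<le> lim (\<lambda>n. snr (xs n))" for n
    using step_max[of t "r n"] ascent_le_lim[of "Suc (r n)"] t mod[of n] by simp
  ultimately have "snr (y(j := t)) \<le> lim (\<lambda>n. snr (xs n))"
    by (intro LIMSEQ_le_const2) auto
  then show "snr (y(j := t)) \<le> snr y" using ascent_limit_point(2)[OF r y] by simp
qed

lemma ascent_block_limits_agree:
  assumes \<sigma>: "strict_mono \<sigma>" and i: "Suc i < K"
    and y: "\<And>k. k < K \<Longrightarrow> (\<lambda>n. xs (\<sigma> n * K + i) k) \<longlonglongrightarrow> y k"
    and z: "\<And>k. k < K \<Longrightarrow> (\<lambda>n. xs (\<sigma> n * K + Suc i) k) \<longlonglongrightarrow> z k"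
    and k: "k < K"
  shows "z k = y k"
proof -
  have r: "strict_mono (\<lambda>n. \<sigma> n * K + m)" for m
    using \<sigma> K_pos by (auto simp: strict_mono_def)
  have mod: "(\<sigma> n * K + i) mod K = i" for n using i by simp
  have off: "z k' = y k'" if "k' < K" "k' \<noteq> i" for k'
  proof -
    have "(\<lambda>n. xs (\<sigma> n * K + Suc i) k') = (\<lambda>n. xs (\<sigma> n * K + i) k')"
      using frame[of k' "\<sigma> _ * K + i"] mod that by auto
    then show ?thesis using y z that LIMSEQ_unique by metis
  qed
  have y_box: "in_box y" and z_box: "in_box z"
    using ascent_limit_point(1)[OF r] y z by blast+
  have "snr (y(i := z i)) = snr z" by (rule snr_cong) (use off in auto)
  also have "\<dots> = snr y"
    using ascent_limit_point(2)[OF r z] ascent_limit_point(2)[OF r y] by simp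
  finally have "z i = y i"
    using coord_max_unique[OF y_box _ ascent_limit_point_coord_max[OF r y mod]] i z_box
    by (auto simp: in_box_def)
  then show ?thesis using off k by (cases "k = i") auto
qed

lemma ascent_lim_eq_Sup: "lim (\<lambda>n. snr (xs n)) = Sup (snr ` Collect in_box)"
proof -
  obtain \<sigma> Y where \<sigma>: "strict_mono \<sigma>"
    and Y: "\<And>i k. i < K \<Longrightarrow> k < K \<Longrightarrow> (\<lambda>n. xs (\<sigma> n * K + i) k) \<longlonglongrightarrow> Y i k"
  proof -
    have bnd: "bounded (range (\<lambda>n. xs (n * K + i) k))" if "k < K" for i k
      using ascent_in_box that
      by (intro bounded_subset[OF compact_imp_bounded[OF compact_Icc[of sb "U k"]]]) (auto simp: in_box_def)
    obtain \<sigma> y where "strict_mono \<sigma>"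
      "\<And>ik. ik \<in> {..<K} \<times> {..<K} \<Longrightarrow> (\<lambda>n. xs (\<sigma> n * K + fst ik) (snd ik)) \<longlonglongrightarrow> y ik"
      by (rule finite_coords_convergent_subseq[of "{..<K} \<times> {..<K}" "\<lambda>n ik. xs (n * K + fst ik) (snd ik)"])
        (use bnd in auto)
    then show thesis using that[of \<sigma> "\<lambda>i k. y (i, k)"] by auto
  qed
  have r: "strict_mono (\<lambda>n. \<sigma> n * K + i)" for i
    using \<sigma> K_pos by (auto simp: strict_mono_def)
  have Y_eq: "Y i k = Y 0 k" if "i < K" "k < K" for i k
    using that
  proof (induction i)
    case (Suc i)
    have "Y (Suc i) k = Y i k"
      using ascent_block_limits_agree[OF \<sigma> Suc(2) Y[of i] Y[of "Suc i"]] Suc(2,3) by simp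
    then show ?case using Suc by simp
  qed simp
  have "coord_max (Y j) j" if "j < K" for j
    using ascent_limit_point_coord_max[OF r Y] that by simp
  then have cm: "coord_max (Y 0) j" if "j < K" for j
    using coord_max_cong[of "Y 0" "Y j" j] Y_eq[of j] that by simp
  have Y0: "in_box (Y 0)" "snr (Y 0) = lim (\<lambda>n. snr (xs n))"
    using ascent_limit_point[OF r Y[OF K_pos]] by simp_all
  have "Sup (snr ` Collect in_box) = snr (Y 0)"
    by (rule cSup_eq_maximum) (use Y0(1) coord_max_imp_max[OF Y0(1) cm] in auto)
  then show ?thesis using Y0 by simp
qed

end

end

lemma U_coef_le_a_coef:
  assumes "0 < eta1" "0 < eta2" "0 < P" "hk \<noteq> 0"
  shows "U_coef eta1 eta2 P sb hk vk \<le> a_coef eta1 eta2 P sb hk vk"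
proof -
  have H: "0 < P * (cmod hk)\<^sup>2" using assms by simp
  show ?thesis
  proof (cases "0 \<le> vk")
    case True
    then show ?thesis using assms H by (simp add: U_coef_def a_coef_def)
  next
    case False
    have "(1 + vk / (eta1 * eta2 * P * (cmod hk)\<^sup>2)) * P * (cmod hk)\<^sup>2
        = P * (cmod hk)\<^sup>2 + vk / (eta1 * eta2)"
      using assms H by (simp add: field_simps)
    moreover have "vk / (eta1 * eta2 * P * (cmod hk)\<^sup>2) < 0" "vk / (eta1 * eta2) < 0" "vk / eta1 < 0"
      using False assms H by (simp_all add: divide_neg_pos)
    ultimately show ?thesis by (simp add: U_coef_def a_coef_def)
  qed
qed

theorem lemma4:
  fixes K :: nat and eta1 eta2 P sb sD :: real
    and h g :: "nat \<Rightarrow> complex" and v :: "nat \<Rightarrow> real"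
    and xs :: "nat \<Rightarrow> nat \<Rightarrow> real"
  assumes "K \<ge> 1"
    and "0 < eta1" "eta1 \<le> 1" "0 < eta2" "eta2 \<le> 1"
    and "P > 0" "sb > 0" "sD > 0"
    and "\<forall>k<K. h k \<noteq> 0 \<and> g k \<noteq> 0"
    and "\<forall>k<K. v k \<ge> - eta1 * eta2 * P * (cmod (h k))^2"
    and "cyclic_ascent K eta1 eta2 P sb sD h g v xs"
  shows "(\<lambda>n. J_obj K eta1 eta2 P sb sD h g v (xs n))
            \<longlonglongrightarrow> opt_val K eta1 eta2 P sb sD h g v
       \<and> (\<forall>y r. strict_mono r \<and> (\<forall>k<K. (\<lambda>n. xs (r n) k) \<longlonglongrightarrow> y k) \<longrightarrow>
            feasible K eta1 eta2 P sb h v y \<and>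
            J_obj K eta1 eta2 P sb sD h g v y = opt_val K eta1 eta2 P sb sD h g v)"
proof -
  define c where "c k = eta1 * (cmod (g k))\<^sup>2" for k
  define a where "a k = a_coef eta1 eta2 P sb (h k) (v k)" for k
  define U where "U k = U_coef eta1 eta2 P sb (h k) (v k)" for k
  interpret relay_snr K c a U sb sD
    by unfold_locales (use assms U_coef_le_a_coef in \<open>auto simp: c_def a_def U_def\<close>)
  have J: "J_obj K eta1 eta2 P sb sD h g v = snr"
    by (auto simp: J_obj_def snr_def ampl_def noise_power_def sig_def noise_def c_def a_def)
  have F: "feasible K eta1 eta2 P sb h v = in_box"
    by (auto simp: feasible_def in_box_def U_def)
  note ascent = assms(11)[unfolded cyclic_ascent_def Let_def J F U_def[symmetric]]
  have start: "in_box (xs 0)" and frame: "\<And>n k. k \<noteq> n mod K \<Longrightarrow> xs (Suc n) k = xs n k"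
    and step_in_box: "\<And>n. sb \<le> xs (Suc n) (n mod K) \<and> xs (Suc n) (n mod K) \<le> U (n mod K)"
    and step_max: "\<And>n t. sb \<le> t \<Longrightarrow> t \<le> U (n mod K) \<Longrightarrow>
      snr ((xs n)(n mod K := t)) \<le> snr (xs (Suc n))"
    using ascent by auto
  note facts = start frame step_in_box step_max
  have opt: "opt_val K eta1 eta2 P sb sD h g v = lim (\<lambda>n. snr (xs n))"
    using ascent_lim_eq_Sup[OF facts] by (simp add: opt_val_def J F)
  show ?thesis
    unfolding J F opt
    using ascent_convergent[OF facts] ascent_limit_point[OF facts]
    by (auto simp: convergent_LIMSEQ_iff)
qed

end
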